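(* For all $0<x<\pi/2$, \[ \frac{P(x)}{(\pi^2-4x^2)^2}<x\sec^2x-\tan x<\frac{Q(x)}{(\pi^2-4x^2)^2}, \] where \[ P(x)=\frac{2\pi^4}{3}x^3+\frac{8\pi^2(\pi^2-10)}{15}x^5+\frac{2(322560+1680\pi^4-672\pi^6+17\pi^8)}{315\pi^4}x^7+\frac{16(168-17\pi^2)}{315}x^9+\frac{32(17\pi^8-161280)}{315\pi^8}x^{11} \] and \[ Q(x)=\frac{2\pi^4}{3}x^3+\frac{32(156-6\pi^2-\pi^4)}{3\pi^2}x^5+\frac{64(-657+37\pi^2+3\pi^4)}{3\pi^4}x^7+\frac{512(285-19\pi^2-\pi^4)}{3\pi^6}x^9+\frac{512(-354+26\pi^2+\pi^4)}{3\pi^8}x^{11}. \] *)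

theory Defs
  imports Complex_Main
begin

definition P19 :: "real \<Rightarrow> real" where
  "P19 x = 2 * pi^4 / 3 * x^3
    + 8 * pi^2 * (pi^2 - 10) / 15 * x^5
    + 2 * (322560 + 1680 * pi^4 - 672 * pi^6 + 17 * pi^8) / (315 * pi^4) * x^7
    + 16 * (168 - 17 * pi^2) / 315 * x^9
    + 32 * (17 * pi^8 - 161280) / (315 * pi^8) * x^11"

definition Q19 :: "real \<Rightarrow> real" where
  "Q19 x = 2 * pi^4 / 3 * x^3
    + 32 * (156 - 6 * pi^2 - pi^4) / (3 * pi^2) * x^5
    + 64 * (-657 + 37 * pi^2 + 3 * pi^4) / (3 * pi^4) * x^7
    + 512 * (285 - 19 * pi^2 - pi^4) / (3 * pi^6) * x^9
    + 512 * (-354 + 26 * pi^2 + pi^4) / (3 * pi^8) * x^11"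

end

theory Submission
  imports Defs "HOL-Analysis.Complex_Transcendental"
begin

text \<open>
  With \<open>u = 2x\<close> one has \<open>x sec\<^sup>2 x - tan x = (u - sin u) / (1 + cos u)\<close>, so each bound
  compares a polynomial times \<open>1 + cos u\<close> with another times \<open>u - sin u\<close>. For \<open>x \<le> 1\<close>,
  sin and cos are replaced by Taylor polynomials with Lagrange remainder at \<open>0\<close>; for \<open>x > 1\<close>
  the same is done in \<open>w = \<pi> - u\<close>, using \<open>sin u = sin w\<close> and \<open>cos u = - cos w\<close>. What remains
  is the positivity of explicit polynomials in one variable and \<open>\<pi>\<close> on short intervals, which
  is certified by bracketing the powers of \<open>\<pi>\<close> between rationals and bounding the resulting
  univariate polynomials by Horner's scheme on a subdivision.
\<close>

fun lpoly :: "real list \<Rightarrow> real \<Rightarrow> real" where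
  "lpoly [] x = 0"
| "lpoly (c # cs) x = c + x * lpoly cs x"

fun lp_add :: "real list \<Rightarrow> real list \<Rightarrow> real list" where
  "lp_add [] ds = ds"
| "lp_add cs [] = cs"
| "lp_add (c # cs) (d # ds) = (c + d) # lp_add cs ds"

definition lp_smult :: "real \<Rightarrow> real list \<Rightarrow> real list" where
  "lp_smult a cs = map (\<lambda>c. a * c) cs"

fun lp_mult :: "real list \<Rightarrow> real list \<Rightarrow> real list" where
  "lp_mult [] ds = []"
| "lp_mult (c # cs) ds = lp_add (lp_smult c ds) (0 # lp_mult cs ds)"

fun lp_comp :: "real list \<Rightarrow> real list \<Rightarrow> real list" where
  "lp_comp [] ds = []"
| "lp_comp (c # cs) ds = lp_add [c] (lp_mult ds (lp_comp cs ds))"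

lemma lpoly_lp_add [simp]: "lpoly (lp_add cs ds) x = lpoly cs x + lpoly ds x"
  by (induction cs ds rule: lp_add.induct) (auto simp: algebra_simps)

lemma lpoly_lp_smult [simp]: "lpoly (lp_smult a cs) x = a * lpoly cs x"
  by (induction cs) (auto simp: lp_smult_def algebra_simps)

lemma lpoly_lp_mult [simp]: "lpoly (lp_mult cs ds) x = lpoly cs x * lpoly ds x"
  by (induction cs) (auto simp: algebra_simps)

lemma lpoly_lp_comp [simp]: "lpoly (lp_comp cs ds) x = lpoly cs (lpoly ds x)"
  by (induction cs) (auto simp: algebra_simps)

lemma lpoly_append: "lpoly (cs @ ds) x = lpoly cs x + x ^ length cs * lpoly ds x"
  by (induction cs) (auto simp: algebra_simps)

lemma lpoly_zero: "list_all (\<lambda>c. c = 0) cs \<Longrightarrow> lpoly cs x = 0"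
  by (induction cs) auto

lemma lpoly_mono_coeffs:
  assumes "list_all2 (\<lambda>c d. c * M \<le> d) cs ds" "0 \<le> x"
  shows "M * lpoly cs x \<le> lpoly ds x"
  using assms(1)
proof (induction cs ds rule: list_all2_induct)
  case (Cons c cs d ds)
  then have "x * (M * lpoly cs x) \<le> x * lpoly ds x"
    using assms(2) by (simp add: mult_left_mono)
  with Cons show ?case by (simp add: algebra_simps)
qed simp

(* The rows of E are the coefficients of v^0, v^1, ..., each a polynomial in p. *)
fun bpoly :: "real list list \<Rightarrow> real \<Rightarrow> real \<Rightarrow> real" where
  "bpoly [] v p = 0"
| "bpoly (c # cs) v p = lpoly c p + v * bpoly cs v p"

fun bp_add :: "real list list \<Rightarrow> real list list \<Rightarrow> real list list" where
  "bp_add [] ds = ds"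
| "bp_add cs [] = cs"
| "bp_add (c # cs) (d # ds) = lp_add c d # bp_add cs ds"

definition bp_smult :: "real list \<Rightarrow> real list list \<Rightarrow> real list list" where
  "bp_smult a cs = map (lp_mult a) cs"

definition bp_diff :: "real list list \<Rightarrow> real list list \<Rightarrow> real list list" where
  "bp_diff cs ds = bp_add cs (bp_smult [-1] ds)"

fun bp_mult :: "real list list \<Rightarrow> real list list \<Rightarrow> real list list" where
  "bp_mult [] ds = []"
| "bp_mult (c # cs) ds = bp_add (bp_smult c ds) ([] # bp_mult cs ds)"

fun bp_comp :: "real list list \<Rightarrow> real list list \<Rightarrow> real list list" where
  "bp_comp [] ds = []"
| "bp_comp (c # cs) ds = bp_add [c] (bp_mult ds (bp_comp cs ds))"

definition bp_of_lp :: "real list \<Rightarrow> real list list" where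
  "bp_of_lp cs = map (\<lambda>c. [c]) cs"

lemma bpoly_bp_add [simp]: "bpoly (bp_add cs ds) v p = bpoly cs v p + bpoly ds v p"
  by (induction cs ds rule: bp_add.induct) (auto simp: algebra_simps)

lemma bpoly_bp_smult [simp]: "bpoly (bp_smult a cs) v p = lpoly a p * bpoly cs v p"
  by (induction cs) (auto simp: bp_smult_def algebra_simps)

lemma bpoly_bp_diff [simp]: "bpoly (bp_diff cs ds) v p = bpoly cs v p - bpoly ds v p"
  by (simp add: bp_diff_def)

lemma bpoly_bp_mult [simp]: "bpoly (bp_mult cs ds) v p = bpoly cs v p * bpoly ds v p"
  by (induction cs) (auto simp: algebra_simps)

lemma bpoly_bp_comp [simp]: "bpoly (bp_comp cs ds) v p = bpoly cs (bpoly ds v p) p"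
  by (induction cs) (auto simp: algebra_simps)

lemma bpoly_bp_of_lp [simp]: "bpoly (bp_of_lp cs) v p = lpoly cs v"
  by (induction cs) (auto simp: bp_of_lp_def)

lemma bpoly_drop_zero_rows:
  "list_all (list_all (\<lambda>c. c = 0)) (take k cs) \<Longrightarrow> bpoly cs v p = v ^ k * bpoly (drop k cs) v p"
proof (induction k arbitrary: cs)
  case (Suc k)
  then show ?case
    by (cases cs) (auto simp: lpoly_zero)
qed simp

fun horner_lower :: "real list \<Rightarrow> real \<Rightarrow> real \<Rightarrow> real" where
  "horner_lower [] a b = 0"
| "horner_lower (c # cs) a b =
     (let r = horner_lower cs a b in c + (if 0 \<le> r then a * r else b * r))"

lemma horner_lower_le:
  assumes "0 \<le> a" "a \<le> x" "x \<le> b"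
  shows "horner_lower cs a b \<le> lpoly cs x"
proof (induction cs)
  case (Cons c cs)
  let ?r = "horner_lower cs a b"
  have "(if 0 \<le> ?r then a * ?r else b * ?r) \<le> x * ?r"
    using assms by (auto intro: mult_right_mono mult_right_mono_neg)
  also have "\<dots> \<le> x * lpoly cs x"
    using Cons assms by (simp add: mult_left_mono)
  finally show ?case by (simp add: Let_def)
qed simp

fun lp_dilate :: "real list \<Rightarrow> real \<Rightarrow> real list" where
  "lp_dilate [] N = []"
| "lp_dilate (c # cs) N = c * N ^ Suc (length cs) # lp_dilate cs N"

lemma lpoly_lp_dilate: "N \<noteq> 0 \<Longrightarrow> lpoly (lp_dilate cs N) t = N ^ length cs * lpoly cs (t / N)"
  by (induction cs) (auto simp: algebra_simps)

definition pos_on_dilated_interval :: "real list \<Rightarrow> real \<Rightarrow> real \<Rightarrow> real \<Rightarrow> bool" where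
  "pos_on_dilated_interval cs N a b \<longleftrightarrow> 0 < horner_lower (lp_comp (lp_dilate cs N) [a, 1]) 0 (b - a)"

lemma lpoly_pos_if_pos_on_dilated_interval:
  assumes "pos_on_dilated_interval cs N a b" "0 < N" "a \<le> N * v" "N * v \<le> b"
  shows "0 < lpoly cs v"
proof -
  have "horner_lower (lp_comp (lp_dilate cs N) [a, 1]) 0 (b - a)
          \<le> lpoly (lp_comp (lp_dilate cs N) [a, 1]) (N * v - a)"
    using assms(3,4) by (intro horner_lower_le) auto
  also have "\<dots> = N ^ length cs * lpoly cs v"
    using assms(2) by (simp add: lpoly_lp_dilate)
  finally have "0 < N ^ length cs * lpoly cs v"
    using assms(1) by (simp add: pos_on_dilated_interval_def)
  then show ?thesis
    using assms(2) by (simp add: zero_less_mult_iff)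
qed

fun pos_on_dilated_partition :: "real list \<Rightarrow> real \<Rightarrow> real list \<Rightarrow> bool" where
  "pos_on_dilated_partition cs N (a # b # c # ts) \<longleftrightarrow>
     pos_on_dilated_interval cs N a b \<and> pos_on_dilated_partition cs N (b # c # ts)"
| "pos_on_dilated_partition cs N [a, b] \<longleftrightarrow> pos_on_dilated_interval cs N a b"
| "pos_on_dilated_partition cs N _ \<longleftrightarrow> False"

lemma lpoly_pos_if_pos_on_dilated_partition:
  "pos_on_dilated_partition cs N ts \<Longrightarrow> 0 < N \<Longrightarrow> hd ts \<le> N * v \<Longrightarrow> N * v \<le> last ts
    \<Longrightarrow> 0 < lpoly cs v"
proof (induction cs N ts rule: pos_on_dilated_partition.induct)
  case (1 cs N a b c ts)
  then show ?case
    using lpoly_pos_if_pos_on_dilated_interval by (cases "N * v \<le> b") auto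
qed (auto intro: lpoly_pos_if_pos_on_dilated_interval)

definition power_brackets :: "real \<Rightarrow> real \<Rightarrow> nat \<Rightarrow> real list \<Rightarrow> real list \<Rightarrow> bool" where
  "power_brackets p s k ls hs \<longleftrightarrow> length hs = length ls \<and>
     (\<forall>j < length ls. ls ! j \<le> s * p ^ (k + j) \<and> s * p ^ (k + j) \<le> hs ! j)"

lemma power_brackets_Cons:
  "power_brackets p s k (l # ls) (h # hs) \<longleftrightarrow>
     l \<le> s * p ^ k \<and> s * p ^ k \<le> h \<and> power_brackets p s (Suc k) ls hs"
  unfolding power_brackets_def by (auto simp: less_Suc_eq_0_disj)

fun bracket_chain :: "real \<Rightarrow> real \<Rightarrow> real \<Rightarrow> real \<Rightarrow> real list \<Rightarrow> real list \<Rightarrow> bool" where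
  "bracket_chain lo hi l h [] [] \<longleftrightarrow> True"
| "bracket_chain lo hi l h (l' # ls) (h' # hs) \<longleftrightarrow>
     0 \<le> l' \<and> l' \<le> l * lo \<and> h * hi \<le> h' \<and> bracket_chain lo hi l' h' ls hs"
| "bracket_chain lo hi l h _ _ \<longleftrightarrow> False"

lemma power_brackets_if_bracket_chain:
  "bracket_chain lo hi l h ls hs \<Longrightarrow> 0 \<le> lo \<Longrightarrow> lo \<le> p \<Longrightarrow> p \<le> hi \<Longrightarrow>
    0 \<le> l \<Longrightarrow> l \<le> s * p ^ k \<Longrightarrow> s * p ^ k \<le> h \<Longrightarrow> power_brackets p s (Suc k) ls hs"
proof (induction lo hi l h ls hs arbitrary: k rule: bracket_chain.induct)
  case (2 lo hi l h l' ls h' hs)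
  have "l' \<le> l * lo" "h * hi \<le> h'" "0 \<le> l'"
    using "2.prems"(1) by auto
  moreover have "l * lo \<le> s * p ^ k * p"
    using "2.prems" by (intro mult_mono) auto
  moreover have "s * p ^ k * p \<le> h * hi"
    using "2.prems" by (intro mult_mono) auto
  ultimately have "l' \<le> s * p ^ Suc k" "s * p ^ Suc k \<le> h'"
    by (simp_all add: algebra_simps)
  with 2 show ?case
    by (simp add: power_brackets_Cons)
qed (auto simp: power_brackets_def)

fun lpoly_lower :: "real list \<Rightarrow> real list \<Rightarrow> real list \<Rightarrow> real" where
  "lpoly_lower (c # cs) (l # ls) (h # hs) =
     (if 0 \<le> c then c * l else c * h) + lpoly_lower cs ls hs"
| "lpoly_lower _ _ _ = 0"

lemma lpoly_lower_le:
  "power_brackets p s k ls hs \<Longrightarrow> length cs \<le> length ls \<Longrightarrow>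
    lpoly_lower cs ls hs \<le> s * p ^ k * lpoly cs p"
proof (induction cs ls hs arbitrary: k rule: lpoly_lower.induct)
  case (1 c cs l ls h hs)
  then have "l \<le> s * p ^ k" "s * p ^ k \<le> h" "power_brackets p s (Suc k) ls hs"
    by (simp_all add: power_brackets_Cons)
  then have "(if 0 \<le> c then c * l else c * h) \<le> c * (s * p ^ k)"
    and "lpoly_lower cs ls hs \<le> s * p ^ Suc k * lpoly cs p"
    using "1.IH"[of "Suc k"] "1.prems"(2) by (auto intro: mult_left_mono mult_left_mono_neg)
  then show ?case
    by (simp add: algebra_simps)
qed (auto simp: power_brackets_def)

lemma lpoly_rows_lower_le:
  assumes "power_brackets p s 0 ls hs" "list_all (\<lambda>c. length c \<le> length ls) E" "0 \<le> v"
  shows "lpoly (map (\<lambda>c. lpoly_lower c ls hs) E) v \<le> s * bpoly E v p"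
  using assms(2)
proof (induction E)
  case (Cons c E)
  have "lpoly_lower c ls hs \<le> s * lpoly c p"
    using lpoly_lower_le[OF assms(1)] Cons.prems by fastforce
  moreover have "v * lpoly (map (\<lambda>c. lpoly_lower c ls hs) E) v \<le> v * (s * bpoly E v p)"
    using Cons assms(3) by (simp add: mult_left_mono)
  ultimately show ?case
    by (simp add: algebra_simps)
qed simp

(* The first k rows of E vanish, so E = v^k E'. Replacing the powers of p in E' by their brackets
   gives a univariate polynomial whose coefficients dominate those of M C, and C is positive on
   [hd ts / N, last ts / N] by Horner bounds on each piece of the subdivision ts. *)
definition bpoly_pos_cert ::
    "real list \<Rightarrow> real list \<Rightarrow> real list list \<Rightarrow> nat \<Rightarrow> real \<Rightarrow> real list \<Rightarrow> real \<Rightarrow> real list \<Rightarrow> bool"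
  where "bpoly_pos_cert ls hs E k M C N ts \<longleftrightarrow>
    list_all (list_all (\<lambda>c. c = 0)) (take k E) \<and>
    list_all (\<lambda>c. length c \<le> length ls) (drop k E) \<and>
    list_all2 (\<lambda>a b. a * M \<le> b) C (map (\<lambda>c. lpoly_lower c ls hs) (drop k E)) \<and>
    pos_on_dilated_partition C N ts"

lemma bpoly_pos_if_cert:
  assumes brackets: "power_brackets p s 0 ls hs" and "0 < s" "0 < M" "0 < N"
    and cert: "bpoly_pos_cert ls hs E k M C N ts"
    and v: "0 < v" "hd ts \<le> N * v" "N * v \<le> last ts"
  shows "0 < bpoly E v p"
proof -
  have "0 < M * lpoly C v"
    using cert v \<open>0 < M\<close> \<open>0 < N\<close> lpoly_pos_if_pos_on_dilated_partition[of C N ts v]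
    by (simp add: bpoly_pos_cert_def)
  also have "\<dots> \<le> lpoly (map (\<lambda>c. lpoly_lower c ls hs) (drop k E)) v"
    using cert v by (intro lpoly_mono_coeffs) (auto simp: bpoly_pos_cert_def)
  also have "\<dots> \<le> s * bpoly (drop k E) v p"
    using cert v by (intro lpoly_rows_lower_le[OF brackets]) (auto simp: bpoly_pos_cert_def)
  finally have "0 < bpoly (drop k E) v p"
    using \<open>0 < s\<close> by (simp add: zero_less_mult_iff)
  then show ?thesis
    using cert v by (simp add: bpoly_drop_zero_rows[of k E] bpoly_pos_cert_def)
qed

(* 10^20 pi^k for k = 0..30, rounded down (up) stepwise from 3.14159265 <= pi <= 3.14159266. *)
definition pi_power_lower :: "real list" where
  "pi_power_lower =
    [100000000000000000000, 314159265000000000000, 986960437853402250000,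
     3100627657401030286093, 9740909058877794849217, 30601968303688897546507,
     96138918698402008418709, 302029320361847316393454, 948853092933274869603899,
     2980909902688943270777317, 9364804640599799415740978, 29420401427594221435966150,
     92426916884979513245703702, 290367722748012534213280394, 912217103582393979592315218,
     2865814547818737595691467485, 9003221919690419562902985918, 28284455809218312374232233223,
     88858238479490052400292033286, 279156388899113124368872309624,
     876995659565995383035785136703, 2755163118174433285279157272445,
     8655600201607881026948353685307, 27192369974709837216335399867360,
     85427349648629110481535752158109, 268377933765113296064830679692136,
     843134144138666757334545986815318, 2648784030190076065641543263265999,
     8321400440682521070760389850533477, 26142450462154969179370970665570569,
     82128930224895154334888373066322107]"

definition pi_power_upper :: "real list" where
  "pi_power_upper =
    [100000000000000000000, 314159266000000000000, 986960444136587560000,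
     3100627687009843515944, 9740909182902901737439, 30601968790734353591040,
     96138920534520121251456, 302029327091571689545885, 948853117095620767741152,
     2980909988085722722079168, 9364804938690793954479135, 29420402457722748296964025,
     92426920415427746364769682, 290367734763511958739902116, 912217144233876005399499337,
     2865814684651306181913187485, 9003222378220758160511094561, 28284457339766077696696756522,
     88858243570692235808932236536, 279156405782178919136330676739,
     876995715397274851165429993377, 2755163302343527656423907312938,
     8655600807743787283928349062847, 27192371965497953291790637381759,
     85427356174798143306512304655256, 268377955121951523993367186504637,
     843134213916932312653376241807819, 2648784257836304403148671925481830,
     8321401182342081394457548609841785, 26142452875361204517950399394272156,
     82128938067630654962351812981113852]"

lemma power_brackets_pi: "power_brackets pi (10 ^ 20) 0 pi_power_lower pi_power_upper"
proof -
  have "bracket_chain (314159265 / 10 ^ 8) (314159266 / 10 ^ 8) (10 ^ 20) (10 ^ 20)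
          (tl pi_power_lower) (tl pi_power_upper)"
    by (simp add: pi_power_lower_def pi_power_upper_def)
  then have "power_brackets pi (10 ^ 20) (Suc 0) (tl pi_power_lower) (tl pi_power_upper)"
    by (rule power_brackets_if_bracket_chain) (use pi_approx in simp_all)
  then show ?thesis
    by (simp add: pi_power_lower_def pi_power_upper_def power_brackets_Cons)
qed

lemma bpoly_pos_at_pi:
  "bpoly_pos_cert pi_power_lower pi_power_upper E k M C N ts \<Longrightarrow> 0 < M \<Longrightarrow> 0 < N \<Longrightarrow>
    0 < v \<Longrightarrow> hd ts \<le> N * v \<Longrightarrow> N * v \<le> last ts \<Longrightarrow> 0 < bpoly E v pi"
  by (rule bpoly_pos_if_cert[OF power_brackets_pi]) simp_all

definition taylor_upper :: "(nat \<Rightarrow> real) \<Rightarrow> nat \<Rightarrow> real list" where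
  "taylor_upper c n = map c [0..<n] @ [inverse (fact n)]"

definition taylor_lower :: "(nat \<Rightarrow> real) \<Rightarrow> nat \<Rightarrow> real list" where
  "taylor_lower c n = map c [0..<n] @ [- inverse (fact n)]"

lemma lpoly_map_upt: "lpoly (map c [0..<n]) x = (\<Sum>m<n. c m * x ^ m)"
  by (induction n) (auto simp: lpoly_append)

lemma taylor_bracket:
  assumes "\<bar>f - (\<Sum>m<n. c m * x ^ m)\<bar> \<le> inverse (fact n) * \<bar>x\<bar> ^ n" "0 \<le> x"
  shows "lpoly (taylor_lower c n) x \<le> f" "f \<le> lpoly (taylor_upper c n) x"
  using assms by (auto simp: taylor_lower_def taylor_upper_def lpoly_append lpoly_map_upt abs_le_iff mult.commute)

lemma Maclaurin_cos_bound: "\<bar>cos x - (\<Sum>m<n. cos_coeff m * x ^ m)\<bar> \<le> inverse (fact n) * \<bar>x\<bar> ^ n"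
proof -
  obtain t where "cos x = (\<Sum>m<n. cos_coeff m * x ^ m) + cos t / fact n * x ^ n"
    using Maclaurin_cos_expansion by blast
  then have "\<bar>cos x - (\<Sum>m<n. cos_coeff m * x ^ m)\<bar> = \<bar>cos t\<bar> * (inverse (fact n) * \<bar>x\<bar> ^ n)"
    by (simp add: abs_mult power_abs divide_inverse)
  also have "\<dots> \<le> inverse (fact n) * \<bar>x\<bar> ^ n"
    by (rule mult_left_le_one_le) auto
  finally show ?thesis .
qed

lemmas sin_taylor_bracket = taylor_bracket[OF Maclaurin_sin_bound]
lemmas cos_taylor_bracket = taylor_bracket[OF Maclaurin_cos_bound]

definition P19_bpoly :: "real list list" where
  "P19_bpoly =
    [[],
     [],
     [],
     [0, 0, 0, 0, 0, 0, 0, 0, 0, 0, 0, 0, 105/4],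
     [],
     [0, 0, 0, 0, 0, 0, 0, 0, 0, 0, -105/2, 0, 21/4],
     [],
     [0, 0, 0, 0, 5040, 0, 0, 0, 105/4, 0, -21/2, 0, 17/64],
     [],
     [0, 0, 0, 0, 0, 0, 0, 0, 21/4, 0, -17/32],
     [],
     [-2520, 0, 0, 0, 0, 0, 0, 0, 17/64]]"

lemma bpoly_P19: "bpoly P19_bpoly u pi = 315 * pi ^ 8 * P19 (u / 2)"
  unfolding P19_def P19_bpoly_def by (simp add: field_simps) algebra

definition Q19_bpoly :: "real list list" where
  "Q19_bpoly =
    [[],
     [],
     [],
     [0, 0, 0, 0, 0, 0, 0, 0, 0, 0, 0, 0, 1/4],
     [],
     [0, 0, 0, 0, 0, 0, 156, 0, -6, 0, -1],
     [],
     [0, 0, 0, 0, -657/2, 0, 37/2, 0, 3/2],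
     [],
     [0, 0, 285, 0, -19, 0, -1],
     [],
     [-177/2, 0, 13/2, 0, 1/4]]"

lemma bpoly_Q19: "bpoly Q19_bpoly u pi = 3 * pi ^ 8 * Q19 (u / 2)"
  unfolding Q19_def Q19_bpoly_def by (simp add: field_simps) algebra

definition denom_bpoly :: "real list list" where
  "denom_bpoly = [[0, 0, 0, 0, 1], [], [0, 0, -2], [], [1]]"

lemma bpoly_denom: "bpoly denom_bpoly v p = (p ^ 2 - v ^ 2) ^ 2"
  by (simp add: denom_bpoly_def power2_eq_square algebra_simps)

definition var_bpoly :: "real list list" where
  "var_bpoly = [[], [1]]"

definition reflect_bpoly :: "real list list" where
  "reflect_bpoly = [[0, 1], [-1]]"

definition one_bpoly :: "real list list" where
  "one_bpoly = [[1]]"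

lemma bpoly_var: "bpoly var_bpoly v p = v"
  and bpoly_reflect: "bpoly reflect_bpoly v p = p - v"
  and bpoly_one: "bpoly one_bpoly v p = 1"
  and lpoly_monom8: "lpoly [0, 0, 0, 0, 0, 0, 0, 0, c] p = c * p ^ 8"
  by (simp_all add: var_bpoly_def reflect_bpoly_def one_bpoly_def eval_nat_numeral algebra_simps)

lemmas bpoly_gap_simps = bpoly_P19 bpoly_Q19 bpoly_denom bpoly_var bpoly_reflect bpoly_one lpoly_monom8

lemmas cert_simps = bpoly_pos_cert_def pi_power_lower_def pi_power_upper_def pos_on_dilated_interval_def
  P19_bpoly_def Q19_bpoly_def denom_bpoly_def var_bpoly_def reflect_bpoly_def one_bpoly_def
  taylor_upper_def taylor_lower_def sin_coeff_def cos_coeff_def upt_rec fact_numeral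
  bp_diff_def bp_smult_def bp_of_lp_def lp_smult_def Let_def

(* The variable is u = 2x near 0 and u = pi - 2x near pi/2; each Taylor remainder has the sign
   that makes the gap a lower bound for the true difference. *)
definition lower_gap_near_0 :: "real list list" where
  "lower_gap_near_0 = bp_diff
     (bp_smult [0, 0, 0, 0, 0, 0, 0, 0, 315]
        (bp_mult denom_bpoly (bp_diff var_bpoly (bp_of_lp (taylor_upper sin_coeff 12)))))
     (bp_mult P19_bpoly (bp_add one_bpoly (bp_of_lp (taylor_upper cos_coeff 14))))"

definition upper_gap_near_0 :: "real list list" where
  "upper_gap_near_0 = bp_diff
     (bp_mult Q19_bpoly (bp_add one_bpoly (bp_of_lp (taylor_lower cos_coeff 14))))
     (bp_smult [0, 0, 0, 0, 0, 0, 0, 0, 3]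
        (bp_mult denom_bpoly (bp_diff var_bpoly (bp_of_lp (taylor_lower sin_coeff 14)))))"

definition lower_gap_near_pi2 :: "real list list" where
  "lower_gap_near_pi2 = bp_diff
     (bp_smult [0, 0, 0, 0, 0, 0, 0, 0, 315]
        (bp_mult (bp_comp denom_bpoly reflect_bpoly)
           (bp_diff reflect_bpoly (bp_of_lp (taylor_upper sin_coeff 12)))))
     (bp_mult (bp_comp P19_bpoly reflect_bpoly) (bp_diff one_bpoly (bp_of_lp (taylor_lower cos_coeff 12))))"

definition upper_gap_near_pi2 :: "real list list" where
  "upper_gap_near_pi2 = bp_diff
     (bp_mult (bp_comp Q19_bpoly reflect_bpoly) (bp_diff one_bpoly (bp_of_lp (taylor_upper cos_coeff 12))))
     (bp_smult [0, 0, 0, 0, 0, 0, 0, 0, 3]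
        (bp_mult (bp_comp denom_bpoly reflect_bpoly)
           (bp_diff reflect_bpoly (bp_of_lp (taylor_lower sin_coeff 12)))))"

lemma Q19_bpoly_pos: "0 < u \<Longrightarrow> u \<le> 13 / 4 \<Longrightarrow> 0 < bpoly Q19_bpoly u pi"
  by (rule bpoly_pos_at_pi[where k = 3 and M = "10 ^ 16 / 4" and N = 16 and ts = "[0, 52]"
        and C = "[9242691688, 0, -24100930, 0, 784387, 0, 27011, 0, 188]"])
     (simp_all add: cert_simps)

lemma lower_gap_near_0_pos: "0 < u \<Longrightarrow> u \<le> 2 \<Longrightarrow> 0 < bpoly lower_gap_near_0 u pi"
  by (rule bpoly_pos_at_pi[where k = 7 and M = "10 ^ 25 / 5579410636800" and N = 16
        and ts = "[0, 16, 24, 32]" and C = "[8500023786, 0, -3659182716, 0, 612052214, -33912547,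
          -46701184, 6872118, 1364266, -348146, -32548, 0, 229, 0, -3, 0, -1, 0, -1]"])
     (simp_all add: lower_gap_near_0_def cert_simps)

lemma upper_gap_near_0_pos: "0 < u \<Longrightarrow> u \<le> 2 \<Longrightarrow> 0 < bpoly upper_gap_near_0 u pi"
  by (rule bpoly_pos_at_pi[where k = 5 and M = "10 ^ 23 / 348713164800" and N = 16
        and ts = "[0, 16, 24, 28, 32]" and C = "[5608174313, 0, -2980149492, 0, 646370632, 0,
          -72999259, 0, 4496987, -11092, -143204, 2247, 1910, -114, -8, 0, -1, 0, 0, 0, -1]"])
     (simp_all add: upper_gap_near_0_def cert_simps)

lemma lower_gap_near_pi2_pos: "0 < u \<Longrightarrow> u \<le> 19 / 16 \<Longrightarrow> 0 < bpoly lower_gap_near_pi2 u pi"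
  by (rule bpoly_pos_at_pi[where k = 4 and M = "10 ^ 26 / 30656102400" and N = 16
        and ts = "[0, 4, 9, 11, 14, 16, 19]" and C = "[1792678246, -4836572950, 5736154055,
          -3894796024, 1629675485, -409780641, 47113348, 4409347, -2467323, 369611, -26120, 845,
          -432, 211, -40, 4, -1, 0, -1, 0, 0]"])
     (simp_all add: lower_gap_near_pi2_def cert_simps)

lemma upper_gap_near_pi2_pos: "0 < u \<Longrightarrow> u \<le> 19 / 16 \<Longrightarrow> 0 < bpoly upper_gap_near_pi2 u pi"
  by (rule bpoly_pos_at_pi[where k = 5 and M = "10 ^ 23 / 1916006400" and N = 16
        and ts = "[0, 4, 9, 14, 19]" and C = "[768190925, -1707786300, 1630623757, -859046615,
          259737338, -38118336, -1309903, 1529640, -217478, -7484, 5259, -395, -21, 3, 0, -1, 0, -1,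
          0, 0]"])
     (simp_all add: upper_gap_near_pi2_def cert_simps)

lemma Q19_nonneg:
  assumes "0 < x" "x < pi / 2"
  shows "0 \<le> Q19 x"
proof -
  have "0 < bpoly Q19_bpoly (2 * x) pi"
    using assms pi_approx by (intro Q19_bpoly_pos) auto
  then show ?thesis
    by (simp add: bpoly_Q19 zero_less_mult_iff)
qed

lemma P19_bound_near_0:
  assumes "0 < x" "x \<le> 1" "0 \<le> P19 x"
  shows "P19 x * (1 + cos (2 * x)) < (pi\<^sup>2 - 4 * x\<^sup>2)\<^sup>2 * (2 * x - sin (2 * x))"
proof -
  define u where "u = 2 * x"
  let ?S = "lpoly (taylor_upper sin_coeff 12) u" and ?C = "lpoly (taylor_upper cos_coeff 14) u"
  have "0 < bpoly lower_gap_near_0 u pi"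
    using assms by (intro lower_gap_near_0_pos) (auto simp: u_def)
  then have "P19 x * (1 + ?C) < (pi\<^sup>2 - u\<^sup>2)\<^sup>2 * (u - ?S)"
    by (simp add: lower_gap_near_0_def bpoly_gap_simps u_def del: lpoly.simps)
  moreover have "P19 x * (1 + cos u) \<le> P19 x * (1 + ?C)"
    using assms cos_taylor_bracket(2)[of u] by (intro mult_left_mono) (auto simp: u_def)
  moreover have "(pi\<^sup>2 - u\<^sup>2)\<^sup>2 * (u - ?S) \<le> (pi\<^sup>2 - u\<^sup>2)\<^sup>2 * (u - sin u)"
    using assms sin_taylor_bracket(2)[of u] by (intro mult_left_mono) (auto simp: u_def)
  ultimately show ?thesis
    by (simp add: u_def power_mult_distrib)
qed

lemma Q19_bound_near_0:
  assumes "0 < x" "x \<le> 1"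
  shows "(pi\<^sup>2 - 4 * x\<^sup>2)\<^sup>2 * (2 * x - sin (2 * x)) < Q19 x * (1 + cos (2 * x))"
proof -
  define u where "u = 2 * x"
  let ?S = "lpoly (taylor_lower sin_coeff 14) u" and ?C = "lpoly (taylor_lower cos_coeff 14) u"
  have "0 < bpoly upper_gap_near_0 u pi"
    using assms by (intro upper_gap_near_0_pos) (auto simp: u_def)
  then have "(pi\<^sup>2 - u\<^sup>2)\<^sup>2 * (u - ?S) < Q19 x * (1 + ?C)"
    by (simp add: upper_gap_near_0_def bpoly_gap_simps u_def del: lpoly.simps)
  moreover have "Q19 x * (1 + ?C) \<le> Q19 x * (1 + cos u)"
    using assms pi_approx Q19_nonneg[of x] cos_taylor_bracket(1)[of u]
    by (intro mult_left_mono) (auto simp: u_def)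
  moreover have "(pi\<^sup>2 - u\<^sup>2)\<^sup>2 * (u - sin u) \<le> (pi\<^sup>2 - u\<^sup>2)\<^sup>2 * (u - ?S)"
    using assms sin_taylor_bracket(1)[of u] by (intro mult_left_mono) (auto simp: u_def)
  ultimately show ?thesis
    by (simp add: u_def power_mult_distrib)
qed

lemma P19_bound_near_pi2:
  assumes "1 < x" "x < pi / 2" "0 \<le> P19 x"
  shows "P19 x * (1 + cos (2 * x)) < (pi\<^sup>2 - 4 * x\<^sup>2)\<^sup>2 * (2 * x - sin (2 * x))"
proof -
  define u where "u = pi - 2 * x"
  have x: "x = (pi - u) / 2" and "0 < u" "u \<le> 19 / 16"
    using assms pi_approx by (auto simp: u_def)
  let ?S = "lpoly (taylor_upper sin_coeff 12) u" and ?C = "lpoly (taylor_lower cos_coeff 12) u"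
  have "0 < bpoly lower_gap_near_pi2 u pi"
    using \<open>0 < u\<close> \<open>u \<le> 19 / 16\<close> by (rule lower_gap_near_pi2_pos)
  then have "P19 x * (1 - ?C) < (pi\<^sup>2 - (pi - u)\<^sup>2)\<^sup>2 * ((pi - u) - ?S)"
    by (simp add: lower_gap_near_pi2_def bpoly_gap_simps x del: lpoly.simps)
  moreover have "P19 x * (1 - cos u) \<le> P19 x * (1 - ?C)"
    using assms \<open>0 < u\<close> cos_taylor_bracket(1)[of u] by (intro mult_left_mono) auto
  moreover have "(pi\<^sup>2 - (pi - u)\<^sup>2)\<^sup>2 * ((pi - u) - ?S) \<le> (pi\<^sup>2 - (pi - u)\<^sup>2)\<^sup>2 * ((pi - u) - sin u)"
    using \<open>0 < u\<close> sin_taylor_bracket(2)[of u] by (intro mult_left_mono) auto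
  moreover have "cos u = - cos (2 * x)" "sin u = sin (2 * x)" "pi - u = 2 * x"
    by (simp_all add: u_def)
  ultimately show ?thesis
    by (simp add: power_mult_distrib)
qed

lemma Q19_bound_near_pi2:
  assumes "1 < x" "x < pi / 2"
  shows "(pi\<^sup>2 - 4 * x\<^sup>2)\<^sup>2 * (2 * x - sin (2 * x)) < Q19 x * (1 + cos (2 * x))"
proof -
  define u where "u = pi - 2 * x"
  have x: "x = (pi - u) / 2" and "0 < u" "u \<le> 19 / 16"
    using assms pi_approx by (auto simp: u_def)
  let ?S = "lpoly (taylor_lower sin_coeff 12) u" and ?C = "lpoly (taylor_upper cos_coeff 12) u"
  have "0 < bpoly upper_gap_near_pi2 u pi"
    using \<open>0 < u\<close> \<open>u \<le> 19 / 16\<close> by (rule upper_gap_near_pi2_pos)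
  then have "(pi\<^sup>2 - (pi - u)\<^sup>2)\<^sup>2 * ((pi - u) - ?S) < Q19 x * (1 - ?C)"
    by (simp add: upper_gap_near_pi2_def bpoly_gap_simps x del: lpoly.simps)
  moreover have "Q19 x * (1 - ?C) \<le> Q19 x * (1 - cos u)"
    using assms \<open>0 < u\<close> Q19_nonneg[of x] cos_taylor_bracket(2)[of u]
    by (intro mult_left_mono) auto
  moreover have "(pi\<^sup>2 - (pi - u)\<^sup>2)\<^sup>2 * ((pi - u) - sin u) \<le> (pi\<^sup>2 - (pi - u)\<^sup>2)\<^sup>2 * ((pi - u) - ?S)"
    using \<open>0 < u\<close> sin_taylor_bracket(1)[of u] by (intro mult_left_mono) auto
  moreover have "cos u = - cos (2 * x)" "sin u = sin (2 * x)" "pi - u = 2 * x"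
    by (simp_all add: u_def)
  ultimately show ?thesis
    by (simp add: power_mult_distrib)
qed

lemma four_sq_less_pi_sq:
  assumes "0 < x" "x < pi / 2"
  shows "4 * x\<^sup>2 < pi\<^sup>2"
proof -
  have "(2 * x)\<^sup>2 < pi\<^sup>2"
    using assms by (intro power_strict_mono) auto
  then show ?thesis
    by (simp add: power_mult_distrib)
qed

lemma one_plus_cos_double_pos:
  assumes "-(pi / 2) < x" "x < pi / 2"
  shows "0 < 1 + cos (2 * x)"
proof -
  have "0 < cos x"
    using assms by (rule cos_gt_zero_pi)
  then show ?thesis
    by (simp add: cos_double_cos)
qed

lemma P19_bound:
  assumes "0 < x" "x < pi / 2"
  shows "P19 x * (1 + cos (2 * x)) < (pi\<^sup>2 - 4 * x\<^sup>2)\<^sup>2 * (2 * x - sin (2 * x))"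
proof (cases "0 \<le> P19 x")
  case True
  then show ?thesis
    using assms P19_bound_near_0 P19_bound_near_pi2 by (cases "x \<le> 1") auto
next
  case False
  have "0 < 1 + cos (2 * x)"
    using assms by (intro one_plus_cos_double_pos) auto
  with False have "P19 x * (1 + cos (2 * x)) < 0"
    by (simp add: mult_neg_pos)
  moreover have "0 \<le> 2 * x - sin (2 * x)"
    using assms sin_x_le_x[of "2 * x"] by simp
  ultimately show ?thesis
    by (smt (verit) zero_le_mult_iff zero_le_power2)
qed

lemma Q19_bound:
  assumes "0 < x" "x < pi / 2"
  shows "(pi\<^sup>2 - 4 * x\<^sup>2)\<^sup>2 * (2 * x - sin (2 * x)) < Q19 x * (1 + cos (2 * x))"
  using assms Q19_bound_near_0 Q19_bound_near_pi2 by (cases "x \<le> 1") auto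

lemma x_sec_squared_minus_tan:
  fixes x :: real
  assumes "cos x \<noteq> 0"
  shows "x * (1 / (cos x)\<^sup>2) - tan x = (2 * x - sin (2 * x)) / (1 + cos (2 * x))"
proof -
  have "1 + cos (2 * x) = 2 * (cos x)\<^sup>2"
    by (simp add: cos_double_cos)
  then show ?thesis
    using assms unfolding sin_double tan_def by (simp add: field_simps power2_eq_square)
qed

theorem mainTheorem19:
  fixes x :: real
  assumes "0 < x" and "x < pi / 2"
  shows "P19 x / (pi^2 - 4 * x^2)^2 < x * (1 / (cos x)^2) - tan x
       \<and> x * (1 / (cos x)^2) - tan x < Q19 x / (pi^2 - 4 * x^2)^2"
proof -
  have "0 < cos x"
    using assms by (intro cos_gt_zero_pi) auto
  moreover have "0 < 1 + cos (2 * x)"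
    using assms by (intro one_plus_cos_double_pos) auto
  moreover have "0 < (pi\<^sup>2 - 4 * x\<^sup>2)\<^sup>2"
    using four_sq_less_pi_sq[OF assms] by simp
  ultimately show ?thesis
    using P19_bound[OF assms] Q19_bound[OF assms] x_sec_squared_minus_tan[of x]
    by (simp add: divide_less_eq less_divide_eq mult.commute)
qed

end
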